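(* Let $d\ge2$, $\delta\in[0,1/d)$, and let $N$ be a $\delta$-upper bounded matrix of dimension $d\times d$. Then $N$ is invertible and $$\|N^{-1}\|_\infty\le\frac{d-1}{1-d\delta}.$$
   Context: A $d\times d$ matrix $N$ is $\delta$-upper bounded if it is stochastic (non-negative entries, rows summing to $1$), $N_{i,i}\ge1-(d-1)\delta$ for all $i$, and $N_{i,j}\le\delta$ for all $i\ne j$. For a matrix $A$, $\|A\|_\infty=\sup_{x\ne0}\|Ax\|_\infty/\|x\|_\infty=\max_i\sum_j|A_{i,j}|$. *)

theory Defs
  imports "HOL-Analysis.Analysis"
begin

definition stochastic :: "real^'n^'n \<Rightarrow> bool" where
  "stochastic N \<longleftrightarrow> (\<forall>i j. N $ i $ j \<ge> 0) \<and> (\<forall>i. (\<Sum>j\<in>UNIV. N $ i $ j) = 1)"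

definition upper_bounded :: "real \<Rightarrow> real^'n^'n \<Rightarrow> bool" where
  "upper_bounded \<delta> N \<longleftrightarrow> stochastic N
     \<and> (\<forall>i. N $ i $ i \<ge> 1 - (real CARD('n) - 1) * \<delta>)
     \<and> (\<forall>i j. i \<noteq> j \<longrightarrow> N $ i $ j \<le> \<delta>)"

text \<open>Induced infinity norm = maximal absolute row sum.\<close>
definition inf_norm :: "real^'n^'m \<Rightarrow> real" where
  "inf_norm A = Max (range (\<lambda>i. \<Sum>j\<in>UNIV. \<bar>A $ i $ j\<bar>))"

end

theory Submission
  imports Defs
begin

text \<open>Write \<open>d = CARD('n)\<close>, \<open>y = N x\<close> and \<open>\<sigma> = \<Sum>j. x j\<close>. As the rows of \<open>N\<close> sum to \<open>1\<close>,
  \<open>y i = x i - \<Sum>j. N i j (x i - x j)\<close>; at an index \<open>i\<close> where \<open>x\<close> is maximal each summand is at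
  most \<open>\<delta> (x i - x j)\<close>, so \<open>y i \<ge> (1 - d\<delta>) x i + \<delta>\<sigma>\<close>, and symmetrically
  \<open>y k \<le> (1 - d\<delta>) x k + \<delta>\<sigma>\<close> at an index \<open>k\<close> where \<open>x\<close> is minimal. If \<open>\<sigma> \<ge> 0\<close> the first
  inequality bounds \<open>(1 - d\<delta>) max x\<close> by \<open>\<parallel>y\<parallel>\<^sub>\<infinity>\<close>; if \<open>\<sigma> < 0\<close> the second one, combined with
  \<open>\<sigma> \<ge> max x + (d - 1) min x\<close>, bounds it by \<open>(d - 1) \<parallel>y\<parallel>\<^sub>\<infinity>\<close>. Thus
  \<open>\<parallel>x\<parallel>\<^sub>\<infinity> \<le> (d - 1) / (1 - d\<delta>) \<parallel>N x\<parallel>\<^sub>\<infinity>\<close>, which makes \<open>N\<close> injective and, applied to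
  \<open>x = N\<^sup>-\<^sup>1 s\<close> for sign vectors \<open>s\<close>, bounds the absolute row sums of \<open>N\<^sup>-\<^sup>1\<close>.\<close>

lemma ex_component_max:
  fixes x :: "'a::linorder^'n"
  obtains i where "\<And>j. x$j \<le> x$i"
proof -
  have "Max (range (($) x)) \<in> range (($) x)"
    by (rule Max_in) auto
  then obtain i where "x$i = Max (range (($) x))"
    by (metis rangeE)
  then have "x$j \<le> x$i" for j
    by (simp add: Max_ge)
  then show ?thesis
    using that by blast
qed

lemma row_at_maximum_lower_bound:
  fixes N :: "real^'n^'n" and x :: "real^'n"
  assumes rows: "\<And>i. (\<Sum>j\<in>UNIV. N$i$j) = 1"
    and off_diag: "\<And>i j. i \<noteq> j \<Longrightarrow> N$i$j \<le> \<delta>"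
    and max: "\<And>j. x$j \<le> x$i"
  shows "(1 - real CARD('n) * \<delta>) * x$i + \<delta> * (\<Sum>j\<in>UNIV. x$j) \<le> (N *v x)$i"
proof -
  have "(N *v x)$i = x$i - (\<Sum>j\<in>UNIV. N$i$j * (x$i - x$j))"
    by (simp add: matrix_vector_mult_def right_diff_distrib sum_subtractf
        flip: sum_distrib_right rows[of i])
  moreover have "(\<Sum>j\<in>UNIV. N$i$j * (x$i - x$j)) \<le> (\<Sum>j\<in>UNIV. \<delta> * (x$i - x$j))"
  proof (rule sum_mono)
    fix j
    show "N$i$j * (x$i - x$j) \<le> \<delta> * (x$i - x$j)"
      using off_diag[of i j] max[of j] by (cases "i = j") (auto intro: mult_right_mono)
  qed
  moreover have "(\<Sum>j\<in>UNIV. \<delta> * (x$i - x$j)) = real CARD('n) * \<delta> * x$i - \<delta> * (\<Sum>j\<in>UNIV. x$j)"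
    by (simp add: sum_subtractf sum_distrib_left algebra_simps)
  ultimately show ?thesis
    by (simp add: algebra_simps)
qed

lemma row_at_minimum_upper_bound:
  fixes N :: "real^'n^'n" and x :: "real^'n"
  assumes rows: "\<And>i. (\<Sum>j\<in>UNIV. N$i$j) = 1"
    and off_diag: "\<And>i j. i \<noteq> j \<Longrightarrow> N$i$j \<le> \<delta>"
    and min: "\<And>j. x$k \<le> x$j"
  shows "(N *v x)$k \<le> (1 - real CARD('n) * \<delta>) * x$k + \<delta> * (\<Sum>j\<in>UNIV. x$j)"
  using row_at_maximum_lower_bound[OF rows off_diag, of "-x" k] min
  by (simp add: matrix_vector_mult_def sum_negf)

lemma component_le_if_image_bounded:
  fixes N :: "real^'n^'n" and x :: "real^'n"
  assumes card: "CARD('n) \<ge> 2" and \<delta>: "0 \<le> \<delta>" "real CARD('n) * \<delta> \<le> 1"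
    and rows: "\<And>i. (\<Sum>j\<in>UNIV. N$i$j) = 1"
    and off_diag: "\<And>i j. i \<noteq> j \<Longrightarrow> N$i$j \<le> \<delta>"
    and bounded: "\<And>i. \<bar>(N *v x)$i\<bar> \<le> b"
  shows "(1 - real CARD('n) * \<delta>) * x$j \<le> (real CARD('n) - 1) * b"
proof -
  define d where "d = real CARD('n)"
  define \<sigma> where "\<sigma> = (\<Sum>j\<in>UNIV. x$j)"
  obtain i where i: "\<And>j. x$j \<le> x$i"
    using ex_component_max by blast
  obtain k where k: "\<And>j. x$k \<le> x$j"
    using ex_component_max[of "-x"] by (metis neg_le_iff_le vector_uminus_component)
  have d2: "d \<ge> 2" and e0: "1 - d * \<delta> \<ge> 0"
    using card \<delta> by (auto simp: d_def)
  have \<delta>1: "\<delta> \<le> 1"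
    using mult_right_mono[of 1 d \<delta>] d2 \<delta> by (simp add: d_def)
  have b0: "b \<ge> 0"
    using bounded[of i] by linarith
  have "(1 - d * \<delta>) * x$j \<le> (1 - d * \<delta>) * x$i"
    using i e0 by (simp add: mult_left_mono)
  also have "\<dots> \<le> (d - 1) * b"
  proof (cases "\<sigma> \<ge> 0")
    case True
    have "(1 - d * \<delta>) * x$i + \<delta> * \<sigma> \<le> b"
      using row_at_maximum_lower_bound[OF rows off_diag i] bounded[of i]
      by (simp add: d_def \<sigma>_def)
    moreover have "\<delta> * \<sigma> \<ge> 0"
      using True \<delta> by simp
    moreover have "b \<le> (d - 1) * b"
      using mult_right_mono[of 1 "d - 1" b] d2 b0 by simp
    ultimately show ?thesis
      by linarith
  next
    case False
    have "real (card (UNIV - {i})) * x$k \<le> (\<Sum>j\<in>UNIV - {i}. x$j)"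
      using k by (rule sum_bounded_below)
    then have "(d - 1) * x$k \<le> \<sigma> - x$i"
      by (simp add: d_def \<sigma>_def sum.remove[of UNIV i] card_Diff_singleton of_nat_diff)
    then have "(1 - d * \<delta>) * ((d - 1) * x$k) \<le> (1 - d * \<delta>) * (\<sigma> - x$i)"
      using e0 by (rule mult_left_mono)
    moreover have "- b \<le> (1 - d * \<delta>) * x$k + \<delta> * \<sigma>"
      using row_at_minimum_upper_bound[OF rows off_diag k] bounded[of k]
      by (simp add: d_def \<sigma>_def)
    then have "(d - 1) * (- b) \<le> (d - 1) * ((1 - d * \<delta>) * x$k + \<delta> * \<sigma>)"
      using d2 by (intro mult_left_mono) auto
    moreover have "(1 - \<delta>) * \<sigma> \<le> 0"
      using False \<delta>1 by (intro mult_nonneg_nonpos) auto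
    ultimately show ?thesis
      by (simp add: algebra_simps)
  qed
  finally show ?thesis
    by (simp add: d_def)
qed

lemma abs_component_le_if_image_bounded:
  fixes N :: "real^'n^'n" and x :: "real^'n"
  assumes card: "CARD('n) \<ge> 2" and \<delta>: "0 \<le> \<delta>" "real CARD('n) * \<delta> < 1"
    and rows: "\<And>i. (\<Sum>j\<in>UNIV. N$i$j) = 1"
    and off_diag: "\<And>i j. i \<noteq> j \<Longrightarrow> N$i$j \<le> \<delta>"
    and bounded: "\<And>i. \<bar>(N *v x)$i\<bar> \<le> b"
  shows "\<bar>x$j\<bar> \<le> (real CARD('n) - 1) / (1 - real CARD('n) * \<delta>) * b"
proof -
  note component_le =
    component_le_if_image_bounded[OF card \<delta>(1) less_imp_le[OF \<delta>(2)] rows off_diag]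
  have "(1 - real CARD('n) * \<delta>) * x$j \<le> (real CARD('n) - 1) * b"
    using component_le bounded by blast
  moreover have "(1 - real CARD('n) * \<delta>) * (-x)$j \<le> (real CARD('n) - 1) * b"
    using component_le[of "-x"] bounded by (simp add: matrix_vector_mult_def sum_negf)
  ultimately show ?thesis
    using \<delta>(2) by (simp add: abs_le_iff field_simps)
qed

lemma inf_norm_leI:
  fixes A :: "real^'n^'m"
  assumes "\<And>x i. (\<And>j. \<bar>x$j\<bar> \<le> 1) \<Longrightarrow> \<bar>(A *v x)$i\<bar> \<le> C"
  shows "inf_norm A \<le> C"
  unfolding inf_norm_def
proof (subst Max_le_iff, safe)
  fix i
  have "(A *v (\<chi> j. sgn (A$i$j)))$i = (\<Sum>j\<in>UNIV. \<bar>A$i$j\<bar>)"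
    by (simp add: matrix_vector_mult_def flip: abs_sgn)
  moreover have "\<bar>(A *v (\<chi> j. sgn (A$i$j)))$i\<bar> \<le> C"
    by (rule assms) (simp add: abs_sgn_eq)
  ultimately show "(\<Sum>j\<in>UNIV. \<bar>A$i$j\<bar>) \<le> C"
    by simp
qed auto

lemma matrix_inv_right:
  fixes A :: "'a::field^'n^'n"
  assumes "invertible A"
  shows "A ** matrix_inv A = mat 1"
  using assms unfolding invertible_def matrix_inv_def
  by (rule someI_ex[where P = "\<lambda>B. A ** B = mat 1 \<and> B ** A = mat 1", THEN conjunct1])

lemma invertible_if_bounded_below:
  fixes N :: "real^'n^'n"
  assumes "\<And>x b j. (\<And>i. \<bar>(N *v x)$i\<bar> \<le> b) \<Longrightarrow> \<bar>x$j\<bar> \<le> C * b"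
  shows "invertible N"
proof -
  have "x = 0" if "N *v x = 0" for x
    using assms[of x 0] that by (simp add: vec_eq_iff)
  then show ?thesis
    by (simp add: invertible_left_inverse matrix_left_invertible_ker)
qed

lemma inf_norm_matrix_inv_le_if_bounded_below:
  fixes N :: "real^'n^'n"
  assumes bounded_below: "\<And>x b j. (\<And>i. \<bar>(N *v x)$i\<bar> \<le> b) \<Longrightarrow> \<bar>x$j\<bar> \<le> C * b"
  shows "inf_norm (matrix_inv N) \<le> C"
proof (rule inf_norm_leI)
  fix x :: "real^'n" and i
  assume "\<And>j. \<bar>x$j\<bar> \<le> 1"
  moreover have "N *v (matrix_inv N *v x) = x"
    using matrix_inv_right[OF invertible_if_bounded_below[OF bounded_below]]
    by (simp add: matrix_vector_mul_assoc)
  ultimately show "\<bar>(matrix_inv N *v x)$i\<bar> \<le> C"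
    using bounded_below[of "matrix_inv N *v x" 1] by simp
qed

theorem corollary14:
  fixes N :: "real^'n^'n" and \<delta> :: real
  assumes "CARD('n) \<ge> 2"
    and "0 \<le> \<delta>" and "\<delta> < 1 / real CARD('n)"
    and "upper_bounded \<delta> N"
  shows "invertible N \<and>
         inf_norm (matrix_inv N) \<le> (real CARD('n) - 1) / (1 - real CARD('n) * \<delta>)"
proof -
  have rows: "\<And>i. (\<Sum>j\<in>UNIV. N$i$j) = 1"
    and off_diag: "\<And>i j. i \<noteq> j \<Longrightarrow> N$i$j \<le> \<delta>"
    using assms(4) unfolding upper_bounded_def stochastic_def by auto
  have "real CARD('n) * \<delta> < 1"
    using assms(3) by (simp add: field_simps)
  note bounded_below =
    abs_component_le_if_image_bounded[OF assms(1,2) this rows off_diag]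
  show ?thesis
    using invertible_if_bounded_below[OF bounded_below]
      inf_norm_matrix_inv_le_if_bounded_below[OF bounded_below] by blast
qed

end
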